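(* For every $x\in\mathrm{mon}(\mathcal{B})$, \[ \limsup_{N\to\infty}\frac1{\log N}\sum_{n=1}^N(x^*_n)^2\le1, \] where $x^*$ is the decreasing rearrangement of $(|x_n|)_{n\in\mathbb{N}}$.
   Context: For $N\in\mathbb{N}$, $\mathcal{B}_N$ is the space of functions $f\colon\{-1,1\}^N\to\mathbb{R}$ with sup norm and Fourier–Walsh coefficients $\widehat f(S)=2^{-N}\sum_xf(x)x^S$, $x^S=\prod_{n\in S}x_n$; $\mathcal{B}=\bigcup_N\mathcal{B}_N$. $\mathrm{mon}(\mathcal{B})$ is the set of $x\in\mathbb{R}^{\mathbb{N}}$ for which there is $C>0$ such that $\sum_{S\subset\{1,\dots,N\}}|\widehat f(S)x^S|\le C\|f\|_\infty$ for all $N$ and all $f\in\mathcal{B}_N$. (Elements of $\mathrm{mon}(\mathcal{B})$ tend to $0$, so the decreasing rearrangement is well defined.) $\log$ is natural. *)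

theory Defs
  imports "HOL-Analysis.Analysis" "HOL-Library.Liminf_Limsup"
begin

definition bcube :: "nat \<Rightarrow> (nat \<Rightarrow> real) set" where
  "bcube N = ({1..N} \<rightarrow>\<^sub>E {-1, 1})"

definition supnorm :: "nat \<Rightarrow> ((nat \<Rightarrow> real) \<Rightarrow> real) \<Rightarrow> real" where
  "supnorm N f = Max ((\<lambda>y. \<bar>f y\<bar>) ` bcube N)"

definition walsh_coeff :: "nat \<Rightarrow> ((nat \<Rightarrow> real) \<Rightarrow> real) \<Rightarrow> nat set \<Rightarrow> real" where
  "walsh_coeff N f S = (\<Sum>y\<in>bcube N. f y * (\<Prod>n\<in>S. y n)) / 2 ^ N"

text \<open>The set mon(B) of sequences x = (x_n)_{n \<ge> 1} (the value x 0 is irrelevant).\<close>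
definition monB :: "(nat \<Rightarrow> real) set" where
  "monB = {x. \<exists>C>0. \<forall>N. \<forall>f :: (nat \<Rightarrow> real) \<Rightarrow> real.
      (\<Sum>S\<in>Pow {1..N}. \<bar>walsh_coeff N f S * (\<Prod>n\<in>S. x n)\<bar>) \<le> C * supnorm N f}"

definition decr_rearr :: "(nat \<Rightarrow> real) \<Rightarrow> nat \<Rightarrow> real" where
  "decr_rearr x n = Inf {Sup {\<bar>x k\<bar> | k. k \<ge> 1 \<and> k \<notin> J} | J. J \<subseteq> {1..} \<and> finite J \<and> card J < n}"

end

theory Submission
  imports Defs
begin

text \<open>Testing the inequality that defines mon(B) against the sign of a Walsh polynomial
  \<open>g(y) = \<Sum>\<^sub>S c\<^sub>S x\<^sup>S y\<^sup>S\<close> with \<open>|c\<^sub>S| \<le> 1\<close> bounds the \<open>L\<^sup>1\<close> norm of \<open>g\<close> by \<open>C\<close>.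
  Applied to the real and imaginary parts of the Riesz product \<open>\<Prod>\<^sub>j (1 + i x\<^sub>j y\<^sub>j)\<close>, whose
  modulus is the constant \<open>\<Prod>\<^sub>j (1 + x\<^sub>j\<^sup>2)\<^sup>1\<^sup>/\<^sup>2\<close> on the cube, this shows that \<open>x\<close> is square
  summable. For a square summable sequence the \<open>\<ell>\<^sup>2\<close> mass beyond some index \<open>M\<close> is below
  \<open>\<epsilon>/2\<close>, so fewer than \<open>n/2\<close> indices beyond \<open>M\<close> satisfy \<open>|x\<^sub>k|\<^sup>2 > \<epsilon>/n\<close>; removing them together
  with the first \<open>M \<le> n/2\<close> indices gives \<open>(x\<^sup>*\<^sub>n)\<^sup>2 \<le> \<epsilon>/n\<close> for large \<open>n\<close>, and comparison with the
  harmonic series bounds the limsup by \<open>\<epsilon>\<close>.\<close>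

subsection \<open>Walsh analysis on the Boolean cube\<close>

lemma finite_bcube: "finite (bcube N)"
  by (simp add: bcube_def finite_PiE)

lemma bcube_nonempty: "bcube N \<noteq> {}"
  by (simp add: bcube_def PiE_eq_empty_iff)

lemma card_bcube: "card (bcube N) = 2 ^ N"
  by (simp add: bcube_def card_PiE eval_nat_numeral)

lemma bcube_coord_sq:
  assumes "y \<in> bcube N" and "j \<in> {1..N}"
  shows "(y j)\<^sup>2 = 1"
proof -
  have "y j \<in> {-1, 1}"
    using assms unfolding bcube_def by blast
  then show ?thesis
    by auto
qed

lemma sum_mult_walsh_coeff:
  "(\<Sum>S\<in>Pow {1..N}. c S * walsh_coeff N f S) =
     (\<Sum>y\<in>bcube N. f y * (\<Sum>S\<in>Pow {1..N}. c S * (\<Prod>n\<in>S. y n))) / 2 ^ N"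
  unfolding walsh_coeff_def
  by (simp add: sum_divide_distrib[symmetric] sum_distrib_left sum_distrib_right mult_ac)
     (rule sum.swap)

lemma supnorm_sgn_le_1: "supnorm N (\<lambda>y. sgn (g y)) \<le> 1"
  unfolding supnorm_def using finite_bcube bcube_nonempty by (auto simp: Max_le_iff sgn_real_def)

lemma sum_abs_walsh_poly_le:
  assumes mon: "\<And>f. (\<Sum>S\<in>Pow {1..N}. \<bar>walsh_coeff N f S * (\<Prod>n\<in>S. x n)\<bar>) \<le> C * supnorm N f"
    and "C \<ge> 0" and c: "\<And>S. \<bar>c S\<bar> \<le> 1"
  shows "(\<Sum>y\<in>bcube N. \<bar>\<Sum>S\<in>Pow {1..N}. c S * (\<Prod>n\<in>S. x n) * (\<Prod>n\<in>S. y n)\<bar>) \<le> 2 ^ N * C"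
proof -
  define g where "g y = (\<Sum>S\<in>Pow {1..N}. c S * (\<Prod>n\<in>S. x n) * (\<Prod>n\<in>S. y n))" for y
  define f where "f y = sgn (g y)" for y
  have "(\<Sum>y\<in>bcube N. \<bar>g y\<bar>) = (\<Sum>y\<in>bcube N. f y * g y)"
    by (simp add: f_def abs_sgn mult.commute)
  also have "\<dots> = 2 ^ N * (\<Sum>S\<in>Pow {1..N}. c S * (\<Prod>n\<in>S. x n) * walsh_coeff N f S)"
    using sum_mult_walsh_coeff[of "\<lambda>S. c S * prod x S" N f] by (simp add: g_def mult.assoc)
  also have "\<dots> \<le> 2 ^ N * (\<Sum>S\<in>Pow {1..N}. \<bar>walsh_coeff N f S * (\<Prod>n\<in>S. x n)\<bar>)"
  proof (intro mult_left_mono sum_mono)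
    fix S
    have "c S * (\<Prod>n\<in>S. x n) * walsh_coeff N f S \<le> \<bar>c S\<bar> * \<bar>walsh_coeff N f S * (\<Prod>n\<in>S. x n)\<bar>"
      by (metis abs_ge_self abs_mult mult.commute mult.left_commute)
    also have "\<dots> \<le> \<bar>walsh_coeff N f S * (\<Prod>n\<in>S. x n)\<bar>"
      using c[of S] by (simp add: mult_left_le_one_le)
    finally show "c S * (\<Prod>n\<in>S. x n) * walsh_coeff N f S \<le> \<bar>walsh_coeff N f S * (\<Prod>n\<in>S. x n)\<bar>" .
  qed simp
  also have "\<dots> \<le> 2 ^ N * (C * supnorm N f)"
    using mon by simp
  also have "\<dots> \<le> 2 ^ N * C"
    using supnorm_sgn_le_1[of N g] \<open>C \<ge> 0\<close> by (simp add: f_def[abs_def] mult_left_le)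
  finally show ?thesis
    by (simp add: g_def)
qed

lemma prod_ii_plus_1_expand:
  fixes a :: "'a \<Rightarrow> real"
  assumes "finite A"
  shows "(\<Prod>j\<in>A. \<i> * complex_of_real (a j) + 1) =
    (\<Sum>S\<in>Pow A. \<i> ^ card S * complex_of_real (\<Prod>j\<in>S. a j))"
  by (simp add: prod_add[OF assms] prod.distrib of_real_prod)

lemma sum_sq_le_of_mon_bound:
  assumes mon: "\<And>f. (\<Sum>S\<in>Pow {1..N}. \<bar>walsh_coeff N f S * (\<Prod>n\<in>S. x n)\<bar>) \<le> C * supnorm N f"
    and "C \<ge> 0"
  shows "(\<Sum>j=1..N. (x j)\<^sup>2) \<le> 4 * C\<^sup>2"
proof -
  define P where "P y = (\<Prod>j\<in>{1..N}. \<i> * complex_of_real (x j * y j) + 1)" for y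
  have P_expand: "P y = (\<Sum>S\<in>Pow {1..N}.
      \<i> ^ card S * complex_of_real ((\<Prod>n\<in>S. x n) * (\<Prod>n\<in>S. y n)))" for y
    unfolding P_def prod_ii_plus_1_expand[OF finite_atLeastAtMost] by (simp add: prod.distrib)
  have Re_Im_scale: "Re (z * complex_of_real r) = Re z * r" "Im (z * complex_of_real r) = Im z * r"
    for z r
    by simp_all
  have "\<bar>Re (\<i> ^ k)\<bar> \<le> 1" "\<bar>Im (\<i> ^ k)\<bar> \<le> 1" for k
    by (metis abs_Re_le_cmod abs_Im_le_cmod norm_ii norm_power power_one)+
  then have Re_bound: "(\<Sum>y\<in>bcube N. \<bar>Re (P y)\<bar>) \<le> 2 ^ N * C"
    and Im_bound: "(\<Sum>y\<in>bcube N. \<bar>Im (P y)\<bar>) \<le> 2 ^ N * C"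
    unfolding P_expand Re_sum Im_sum Re_Im_scale mult.assoc[symmetric]
    by (intro sum_abs_walsh_poly_le[OF mon \<open>C \<ge> 0\<close>]; simp)+
  define R where "R = (\<Prod>j\<in>{1..N}. sqrt (1 + (x j)\<^sup>2))"
  have norm_P: "cmod (P y) = R" if "y \<in> bcube N" for y
    unfolding P_def R_def prod_norm[symmetric]
  proof (rule prod.cong[OF refl])
    fix j assume "j \<in> {1..N}"
    then have "(x j * y j)\<^sup>2 = (x j)\<^sup>2"
      using bcube_coord_sq[OF that] by (simp add: power_mult_distrib)
    then show "cmod (\<i> * complex_of_real (x j * y j) + 1) = sqrt (1 + (x j)\<^sup>2)"
      by (simp add: cmod_def)
  qed
  have "2 ^ N * R = (\<Sum>y\<in>bcube N. cmod (P y))"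
    by (simp add: norm_P card_bcube)
  also have "\<dots> \<le> (\<Sum>y\<in>bcube N. \<bar>Re (P y)\<bar>) + (\<Sum>y\<in>bcube N. \<bar>Im (P y)\<bar>)"
    by (simp only: sum.distrib[symmetric]) (intro sum_mono cmod_le)
  also have "\<dots> \<le> 2 ^ N * C + 2 ^ N * C"
    using Re_bound Im_bound by (rule add_mono)
  finally have "R \<le> 2 * C"
    by simp
  moreover have "R \<ge> 0"
    by (simp add: R_def prod_nonneg)
  ultimately have "R\<^sup>2 \<le> (2 * C)\<^sup>2"
    by (intro power_mono)
  moreover have "R\<^sup>2 = (\<Prod>j=1..N. 1 + (x j)\<^sup>2)"
    unfolding R_def prod_power_distrib by (rule prod.cong) simp_all
  moreover have "(\<Sum>j=1..N. (x j)\<^sup>2) \<le> (\<Prod>j=1..N. 1 + (x j)\<^sup>2)"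
    by (rule sum_le_prod) simp
  ultimately show ?thesis
    by (simp add: power_mult_distrib)
qed

lemma summable_sq_if_monB:
  assumes "x \<in> monB"
  shows "summable (\<lambda>k. (x k)\<^sup>2)"
proof -
  obtain C where "C > 0"
    and mon: "\<And>N f. (\<Sum>S\<in>Pow {1..N}. \<bar>walsh_coeff N f S * (\<Prod>n\<in>S. x n)\<bar>) \<le> C * supnorm N f"
    using assms unfolding monB_def by blast
  have "(\<Sum>k\<le>n. (x k)\<^sup>2) \<le> (x 0)\<^sup>2 + 4 * C\<^sup>2" for n
  proof -
    have "(\<Sum>k\<le>n. (x k)\<^sup>2) = (x 0)\<^sup>2 + (\<Sum>k=1..n. (x k)\<^sup>2)"
      by (simp add: atMost_atLeast0 sum.atLeast_Suc_atMost)
    then show ?thesis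
      using sum_sq_le_of_mon_bound[OF mon] \<open>C > 0\<close> by simp
  qed
  then show ?thesis
    by (intro bounded_imp_summable) auto
qed

subsection \<open>Decreasing rearrangement of a square summable sequence\<close>

lemma ex_pos_nat_notin_finite:
  "finite (J :: nat set) \<Longrightarrow> \<exists>k\<ge>1. k \<notin> J"
  using ex_new_if_finite[OF infinite_UNIV_nat, of "insert 0 J"] by (auto simp: Suc_le_eq)

text \<open>Without boundedness of \<open>|x|\<close> the suprema in the definition of \<open>decr_rearr\<close> are junk values of
  \<open>Sup\<close> on unbounded sets, and the infimum over them cannot be controlled.\<close>

lemma Sup_abs_outside_finite_nonneg:
  fixes x :: "nat \<Rightarrow> real"
  assumes bdd: "bdd_above ((\<lambda>k. \<bar>x k\<bar>) ` {1..})" and "finite J"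
  shows "0 \<le> Sup {\<bar>x k\<bar> | k. k \<ge> 1 \<and> k \<notin> J}"
proof -
  obtain k where "k \<ge> 1" "k \<notin> J"
    using ex_pos_nat_notin_finite[OF \<open>finite J\<close>] by blast
  moreover have "bdd_above {\<bar>x k\<bar> | k. k \<ge> 1 \<and> k \<notin> J}"
    using bdd by (rule bdd_above_mono) auto
  ultimately have "\<bar>x k\<bar> \<le> Sup {\<bar>x k\<bar> | k. k \<ge> 1 \<and> k \<notin> J}"
    by (intro cSup_upper) auto
  then show ?thesis
    by linarith
qed

lemma decr_rearr_nonneg:
  assumes "bdd_above ((\<lambda>k. \<bar>x k\<bar>) ` {1..})" and "n \<ge> 1"
  shows "0 \<le> decr_rearr x n"
  unfolding decr_rearr_def
proof (rule cInf_greatest)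
  have "Sup {\<bar>x k\<bar> | k. k \<ge> 1 \<and> k \<notin> {}} \<in>
      {Sup {\<bar>x k\<bar> | k. k \<ge> 1 \<and> k \<notin> J} | J. J \<subseteq> {1..} \<and> finite J \<and> card J < n}"
    using \<open>n \<ge> 1\<close> by (intro CollectI exI[of _ "{}"]) simp
  then show "{Sup {\<bar>x k\<bar> | k. k \<ge> 1 \<and> k \<notin> J} | J. J \<subseteq> {1..} \<and> finite J \<and> card J < n} \<noteq> {}"
    by blast
qed (use Sup_abs_outside_finite_nonneg[OF assms(1)] in auto)

lemma decr_rearr_le:
  assumes bdd: "bdd_above ((\<lambda>k. \<bar>x k\<bar>) ` {1..})"
    and J: "J \<subseteq> {1..}" "finite J" "card J < n"
    and r: "\<And>k. k \<ge> 1 \<Longrightarrow> k \<notin> J \<Longrightarrow> \<bar>x k\<bar> \<le> r"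
  shows "decr_rearr x n \<le> r"
proof -
  have "decr_rearr x n \<le> Sup {\<bar>x k\<bar> | k. k \<ge> 1 \<and> k \<notin> J}"
    unfolding decr_rearr_def
  proof (rule cInf_lower)
    show "bdd_below {Sup {\<bar>x k\<bar> | k. k \<ge> 1 \<and> k \<notin> J} | J. J \<subseteq> {1..} \<and> finite J \<and> card J < n}"
      using Sup_abs_outside_finite_nonneg[OF bdd] by (auto intro: bdd_belowI[of _ 0])
  qed (use J in blast)
  also have "\<dots> \<le> r"
  proof (rule cSup_least)
    show "{\<bar>x k\<bar> | k. k \<ge> 1 \<and> k \<notin> J} \<noteq> {}"
      using ex_pos_nat_notin_finite[OF \<open>finite J\<close>] by blast
  qed (use r in auto)
  finally show ?thesis .
qed

lemma decr_rearr_sq_eventually_le: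
  fixes x :: "nat \<Rightarrow> real"
  assumes summable: "summable (\<lambda>k. (x k)\<^sup>2)" and "\<epsilon> > 0"
  shows "eventually (\<lambda>n. (decr_rearr x n)\<^sup>2 \<le> \<epsilon> / real n) sequentially"
proof -
  have bdd: "bdd_above ((\<lambda>k. \<bar>x k\<bar>) ` {1..})"
  proof (rule bdd_aboveI2)
    fix k
    have "(x k)\<^sup>2 \<le> (\<Sum>k. (x k)\<^sup>2)"
      using sum_le_suminf[OF summable, of "{k}"] by simp
    then show "\<bar>x k\<bar> \<le> sqrt (\<Sum>k. (x k)\<^sup>2)"
      using real_sqrt_le_mono by fastforce
  qed
  obtain M where M: "\<And>m n. m \<ge> M \<Longrightarrow> norm (\<Sum>k=m..<n. (x k)\<^sup>2) < \<epsilon> / 2"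
    using summable \<open>\<epsilon> > 0\<close> unfolding summable_Cauchy by (meson half_gt_zero)
  have tail: "(\<Sum>k\<in>T. (x k)\<^sup>2) < \<epsilon> / 2" if "finite T" "T \<subseteq> {M<..}" for T
  proof -
    have "T \<subseteq> {Suc M..<Suc (Max (insert M T))}"
      using that by (auto simp: less_Suc_eq_le)
    then have "(\<Sum>k\<in>T. (x k)\<^sup>2) \<le> (\<Sum>k=Suc M..<Suc (Max (insert M T)). (x k)\<^sup>2)"
      by (intro sum_mono2) auto
    also have "\<dots> \<le> norm (\<Sum>k=Suc M..<Suc (Max (insert M T)). (x k)\<^sup>2)"
      by simp
    also have "\<dots> < \<epsilon> / 2"
      by (rule M) simp
    finally show ?thesis .
  qed
  have "(decr_rearr x n)\<^sup>2 \<le> \<epsilon> / real n" if n: "n \<ge> 1" "n \<ge> 2 * M" for n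
  proof -
    define t where "t = \<epsilon> / real n"
    define large where "large = {k. M < k \<and> t < (x k)\<^sup>2}"
    have card_large: "2 * card T < n" if "finite T" "T \<subseteq> large" for T
    proof -
      have "real (card T) * t \<le> (\<Sum>k\<in>T. (x k)\<^sup>2)"
        using that unfolding large_def by (intro sum_bounded_below) auto
      also have "\<dots> < \<epsilon> / 2"
        using that unfolding large_def by (intro tail) auto
      finally show ?thesis
        using n \<open>\<epsilon> > 0\<close> by (simp add: t_def field_simps)
    qed
    have "finite large"
    proof (rule ccontr)
      assume "infinite large"
      then obtain T where "finite T" "card T = n" "T \<subseteq> large"
        using infinite_arbitrarily_large by blast
      then show False
        using card_large by fastforce
    qed
    define J where "J = {1..M} \<union> large"
    have "card J \<le> M + card large"
      unfolding J_def using card_Un_le[of "{1..M}" large] by simp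
    then have "card J < n"
      using card_large[OF \<open>finite large\<close> order_refl] n by linarith
    moreover have "J \<subseteq> {1..}"
      unfolding J_def large_def by auto
    moreover have "finite J"
      unfolding J_def using \<open>finite large\<close> by simp
    moreover have "\<bar>x k\<bar> \<le> sqrt t" if "k \<ge> 1" "k \<notin> J" for k
      using that unfolding J_def large_def by (auto intro: real_le_rsqrt)
    ultimately have "decr_rearr x n \<le> sqrt t"
      by (intro decr_rearr_le[OF bdd])
    then have "(decr_rearr x n)\<^sup>2 \<le> (sqrt t)\<^sup>2"
      using decr_rearr_nonneg[OF bdd \<open>n \<ge> 1\<close>] by (intro power_mono)
    then show ?thesis
      using \<open>\<epsilon> > 0\<close> by (simp add: t_def)
  qed
  then show ?thesis
    unfolding eventually_sequentially by (intro exI[of _ "max 1 (2 * M)"]) simp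
qed

subsection \<open>Comparison with the harmonic series\<close>

lemma harm_le_1_plus_ln:
  assumes "N \<ge> 1"
  shows "harm N \<le> 1 + ln (real N)"
  using euler_mascheroni_sequence_decreasing[of 1 N] assms by (simp add: harm_def)

lemma limsup_sum_div_ln_le:
  fixes a :: "nat \<Rightarrow> real"
  assumes "eventually (\<lambda>n. a n \<le> c / real n) sequentially" and "c \<ge> 0"
  shows "limsup (\<lambda>N. ereal ((\<Sum>n=1..N. a n) / ln (real N))) \<le> c"
proof -
  obtain n0 where n0: "\<And>n. n \<ge> n0 \<Longrightarrow> a n \<le> c / real n"
    using assms(1) unfolding eventually_sequentially by blast
  define A where "A = (\<Sum>n<n0. \<bar>a n\<bar>)"
  have partial_sum: "(\<Sum>n=1..N. a n) \<le> A + c * (1 + ln (real N))" if "N \<ge> 1" for N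
  proof -
    have "(\<Sum>n=1..N. a n) \<le> (\<Sum>n=1..N. (if n < n0 then \<bar>a n\<bar> else 0) + c * inverse (real n))"
    proof (rule sum_mono)
      fix n
      show "a n \<le> (if n < n0 then \<bar>a n\<bar> else 0) + c * inverse (real n)"
      proof (cases "n < n0")
        case True
        then show ?thesis
          using \<open>c \<ge> 0\<close> by (simp add: add_increasing2)
      next
        case False
        then show ?thesis
          using n0[of n] by (simp add: divide_inverse)
      qed
    qed
    also have "\<dots> = (\<Sum>n=1..N. if n < n0 then \<bar>a n\<bar> else 0) + c * harm N"
      by (simp add: sum.distrib sum_distrib_left harm_def)
    also have "(\<Sum>n=1..N. if n < n0 then \<bar>a n\<bar> else 0) = (\<Sum>n\<in>{n\<in>{1..N}. n < n0}. \<bar>a n\<bar>)"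
      by (rule sum.inter_filter[symmetric]) simp
    also have "(\<Sum>n\<in>{n\<in>{1..N}. n < n0}. \<bar>a n\<bar>) \<le> A"
      unfolding A_def by (intro sum_mono2) auto
    also have "c * harm N \<le> c * (1 + ln (real N))"
      using harm_le_1_plus_ln[OF that] \<open>c \<ge> 0\<close> by (rule mult_left_mono)
    finally show ?thesis
      by simp
  qed
  have "eventually (\<lambda>N. ereal ((\<Sum>n=1..N. a n) / ln (real N)) \<le> ereal (c + (A + c) / ln (real N)))
      sequentially"
    unfolding eventually_sequentially
  proof (intro exI allI impI)
    fix N :: nat
    assume "N \<ge> 2"
    then have "ln (real N) > 0"
      by simp
    then show "ereal ((\<Sum>n=1..N. a n) / ln (real N)) \<le> ereal (c + (A + c) / ln (real N))"
      using partial_sum[of N] \<open>N \<ge> 2\<close> by (simp add: field_simps)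
  qed
  then have "limsup (\<lambda>N. ereal ((\<Sum>n=1..N. a n) / ln (real N))) \<le>
      limsup (\<lambda>N. ereal (c + (A + c) / ln (real N)))"
    by (rule Limsup_mono)
  also have "\<dots> = c"
  proof (intro lim_imp_Limsup tendsto_ereal)
    have "filterlim (\<lambda>N. ln (real N)) at_top sequentially"
      by (rule filterlim_compose[OF ln_at_top filterlim_real_sequentially])
    then have "(\<lambda>N. (A + c) / ln (real N)) \<longlonglongrightarrow> 0"
      by (intro tendsto_divide_0[OF tendsto_const] filterlim_at_top_imp_at_infinity)
    then show "(\<lambda>N. c + (A + c) / ln (real N)) \<longlonglongrightarrow> c"
      using tendsto_add[OF tendsto_const[of c]] by fastforce
  qed simp
  finally show ?thesis .
qed

theorem proposition6p13:
  fixes x :: "nat \<Rightarrow> real"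
  assumes "x \<in> monB"
  shows "limsup (\<lambda>N. ereal ((\<Sum>n=1..N. (decr_rearr x n)\<^sup>2) / ln (real N))) \<le> 1"
proof -
  have "summable (\<lambda>k. (x k)\<^sup>2)"
    using assms by (rule summable_sq_if_monB)
  then have "eventually (\<lambda>n. (decr_rearr x n)\<^sup>2 \<le> 1 / real n) sequentially"
    by (rule decr_rearr_sq_eventually_le) simp
  then show ?thesis
    using limsup_sum_div_ln_le[of _ 1] by (simp add: one_ereal_def)
qed

end
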